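(* The LoRA-Null residual weight is in general not a solution of either of the following two problems. Precisely: there exist dimensions $n, m, N$ with $N \ge m$, a matrix $\mathbf{W}_0 \in \mathbb{R}^{n\times m}$ of rank $R$, a matrix $\mathbf{X}_{\text{pre}} \in \mathbb{R}^{m \times N}$, and an integer $1 \le r < R$ with $r<\min(n,m)$, such that the LoRA-Null residual $\mathbf{W}_0' = \mathbf{W}_0 - \mathbf{B}\mathbf{A}$ (defined below) is neither a solution of $$\text{(P1)}\quad \min_{\mathbf{W}'} \|\mathbf{W}' - \mathbf{W}_0\|_{\mathrm F} \ \text{ s.t. } \operatorname{rank}(\mathbf{W}') = R - r,$$ nor a solution of $$\text{(P2)}\quad \min_{\mathbf{W}'} \|\mathbf{W}'\mathbf{X}_{\text{pre}} - \mathbf{W}_0\mathbf{X}_{\text{pre}}\|_{\mathrm F} \ \text{ s.t. } \operatorname{rank}(\mathbf{W}') = R - r,$$ where both minimizations range over $\mathbf{W}' \in \mathbb{R}^{n\times m}$.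
   Context: LoRA-Null construction: given $\mathbf{W}_0 \in \mathbb{R}^{n\times m}$, $\mathbf{X}_{\text{pre}} \in \mathbb{R}^{m\times N}$ and a rank $r$, take an SVD $\mathbf{X}_{\text{pre}} = \mathbf{U}\mathbf{\Sigma}\mathbf{V}^\top$ with $\mathbf{U} \in \mathbb{R}^{m\times m}$ orthogonal and singular values in non-increasing order, and let $\mathbf{U}_{\text{null}} = \mathbf{U}_{[:,-r:]} \in \mathbb{R}^{m\times r}$ be the last $r$ columns of $\mathbf{U}$ (left singular vectors of the $r$ smallest singular values). Take an SVD $\mathbf{W}_0\mathbf{U}_{\text{null}}\mathbf{U}_{\text{null}}^\top = \mathbf{U}'\mathbf{\Sigma}'\mathbf{V}'^\top$ with singular values in non-increasing order and set $\mathbf{B} = \mathbf{U}'_{[:,:r]}\sqrt{\mathbf{\Sigma}'_{[:r]}}$, $\mathbf{A} = \sqrt{\mathbf{\Sigma}'_{[:r]}}\,\mathbf{V}'^\top_{[:r,:]}$. The LoRA-Null residual weight is $\mathbf{W}_0' = \mathbf{W}_0 - \mathbf{B}\mathbf{A}$ (which equals $\mathbf{W}_0 - \mathbf{W}_0\mathbf{U}_{\text{null}}\mathbf{U}_{\text{null}}^\top$). Notation: $\mathbf{M}_{[:,:k]}$, $\mathbf{M}_{[:,-k:]}$ are the first/last $k$ columns, $\mathbf{M}_{[:k,:]}$ the first $k$ rows, $\mathbf{\Sigma}_{[:k]}$ the leading $k\times k$ diagonal block; $\|\cdot\|_{\mathrm F}$ is the Frobenius norm. *)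

theory Defs
  imports "Jordan_Normal_Form.DL_Rank"
begin

definition mat_rank :: "real mat \<Rightarrow> nat" where
  "mat_rank A = vec_space.rank (dim_row A) A"

definition fro_norm :: "real mat \<Rightarrow> real" where
  "fro_norm A = sqrt (\<Sum>i<dim_row A. \<Sum>j<dim_col A. (A $$ (i,j))\<^sup>2)"

definition orth_mat :: "nat \<Rightarrow> real mat \<Rightarrow> bool" where
  "orth_mat k U \<longleftrightarrow> U \<in> carrier_mat k k \<and> transpose_mat U * U = 1\<^sub>m k"

definition is_svd :: "real mat \<Rightarrow> real mat \<Rightarrow> real mat \<Rightarrow> real mat \<Rightarrow> bool" where
  "is_svd M U S V \<longleftrightarrow>
     orth_mat (dim_row M) U \<and> orth_mat (dim_col M) V \<and>
     S \<in> carrier_mat (dim_row M) (dim_col M) \<and> diagonal_mat S \<and>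
     (\<forall>i < min (dim_row M) (dim_col M). 0 \<le> S $$ (i,i)) \<and>
     (\<forall>i j. i \<le> j \<longrightarrow> j < min (dim_row M) (dim_col M) \<longrightarrow> S $$ (j,j) \<le> S $$ (i,i)) \<and>
     M = U * S * transpose_mat V"

definition first_cols :: "nat \<Rightarrow> real mat \<Rightarrow> real mat" where
  "first_cols k M = mat (dim_row M) k (\<lambda>(i,j). M $$ (i,j))"

definition last_cols :: "nat \<Rightarrow> real mat \<Rightarrow> real mat" where
  "last_cols k M = mat (dim_row M) k (\<lambda>(i,j). M $$ (i, dim_col M - k + j))"

definition first_rows :: "nat \<Rightarrow> real mat \<Rightarrow> real mat" where
  "first_rows k M = mat k (dim_col M) (\<lambda>(i,j). M $$ (i,j))"

definition sqrt_lead_diag :: "nat \<Rightarrow> real mat \<Rightarrow> real mat" where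
  "sqrt_lead_diag k S = mat k k (\<lambda>(i,j). if i = j then sqrt (S $$ (i,i)) else 0)"

(* W0' is a LoRA-Null residual weight of W0 (n x m) for X_pre (m x N) and rank r,
   for some admissible choice of the two SVDs in the construction. *)
definition lora_null_residual :: "real mat \<Rightarrow> real mat \<Rightarrow> nat \<Rightarrow> real mat \<Rightarrow> bool" where
  "lora_null_residual W0 X r W0' \<longleftrightarrow>
     (\<exists>U S V U' S' V'.
        is_svd X U S V \<and>
        (let Unull = last_cols r U;
             P = W0 * Unull * transpose_mat Unull in
         is_svd P U' S' V' \<and>
         (let B = first_cols r U' * sqrt_lead_diag r S';
              A = sqrt_lead_diag r S' * first_rows r (transpose_mat V') in
          W0' = W0 - B * A)))"

definition solves_P1 :: "real mat \<Rightarrow> nat \<Rightarrow> real mat \<Rightarrow> bool" where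
  "solves_P1 W0 k W' \<longleftrightarrow>
     W' \<in> carrier_mat (dim_row W0) (dim_col W0) \<and> mat_rank W' = k \<and>
     (\<forall>W''\<in>carrier_mat (dim_row W0) (dim_col W0). mat_rank W'' = k \<longrightarrow>
        fro_norm (W' - W0) \<le> fro_norm (W'' - W0))"

definition solves_P2 :: "real mat \<Rightarrow> real mat \<Rightarrow> nat \<Rightarrow> real mat \<Rightarrow> bool" where
  "solves_P2 W0 X k W' \<longleftrightarrow>
     W' \<in> carrier_mat (dim_row W0) (dim_col W0) \<and> mat_rank W' = k \<and>
     (\<forall>W''\<in>carrier_mat (dim_row W0) (dim_col W0). mat_rank W'' = k \<longrightarrow>
        fro_norm (W' * X - W0 * X) \<le> fro_norm (W'' * X - W0 * X))"

end

theory Submission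
  imports Defs
begin

text \<open>If the null space of X_pre lies in the kernel of W0, then W0 U_null = 0, so the second
SVD factorises the zero matrix, B A = 0, and the LoRA-Null residual is W0 itself. Its rank R
differs from R - r, so it is not even feasible for (P1) or (P2). For X_pre = diag(1,1,0) the
eigen-equation X X^T U = U S S^T forces the last left singular vector to be e3 up to sign,
and W0 = [I_2 | 0] annihilates it.\<close>

lemma mult_transpose_orth_cancel:
  fixes A V :: "'a :: comm_semiring_1 mat"
  assumes "A \<in> carrier_mat p q" "V \<in> carrier_mat q q" "transpose_mat V * V = 1\<^sub>m q"
  shows "A * transpose_mat V * V = A"
  using assms by (simp add: assoc_mult_mat[of A p q _ q _ q] right_mult_one_mat)

lemma orth_mat_mult_transpose: "orth_mat k U \<Longrightarrow> U * transpose_mat U = 1\<^sub>m k"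
  unfolding orth_mat_def by (auto intro: mat_mult_left_right_inverse)

lemma diagonal_mat_mult_index_left:
  fixes D B :: "'a :: semiring_0 mat"
  assumes D: "D \<in> carrier_mat n n" "diagonal_mat D" and B: "B \<in> carrier_mat n m"
    and "i < n" "k < m"
  shows "(D * B) $$ (i,k) = D $$ (i,i) * B $$ (i,k)"
proof -
  have "(D * B) $$ (i,k) = (\<Sum>j<n. D $$ (i,j) * B $$ (j,k))"
    using assms by (simp add: scalar_prod_def lessThan_atLeast0)
  also have "\<dots> = (\<Sum>j<n. if j = i then D $$ (i,i) * B $$ (i,k) else 0)"
    by (rule sum.cong) (use D \<open>i < n\<close> in \<open>auto simp: diagonal_mat_def\<close>)
  finally show ?thesis using \<open>i < n\<close> by simp
qed

lemma diagonal_mat_mult_index_right: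
  fixes D B :: "'a :: semiring_0 mat"
  assumes D: "D \<in> carrier_mat m m" "diagonal_mat D" and B: "B \<in> carrier_mat n m"
    and "i < n" "k < m"
  shows "(B * D) $$ (i,k) = B $$ (i,k) * D $$ (k,k)"
proof -
  have "(B * D) $$ (i,k) = (\<Sum>j<m. B $$ (i,j) * D $$ (j,k))"
    using assms by (simp add: scalar_prod_def lessThan_atLeast0)
  also have "\<dots> = (\<Sum>j<m. if j = k then B $$ (i,k) * D $$ (k,k) else 0)"
    by (rule sum.cong) (use D \<open>k < m\<close> in \<open>auto simp: diagonal_mat_def\<close>)
  finally show ?thesis using \<open>k < m\<close> by simp
qed

lemma diagonal_mat_transpose: "diagonal_mat A \<Longrightarrow> diagonal_mat (transpose_mat A)"
  by (auto simp: diagonal_mat_def)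

lemma svd_gram_eigen:
  assumes "is_svd M U S V"
  shows "M * transpose_mat M * U = U * (S * transpose_mat S)"
proof -
  obtain p q where U: "U \<in> carrier_mat p p" and V: "V \<in> carrier_mat q q"
    and S: "S \<in> carrier_mat p q" and UU: "transpose_mat U * U = 1\<^sub>m p"
    and VV: "transpose_mat V * V = 1\<^sub>m q" and M: "M = U * S * transpose_mat V"
    using assms by (auto simp: is_svd_def orth_mat_def)
  have MV: "M * V = U * S"
    unfolding M using U V S VV by (intro mult_transpose_orth_cancel) auto
  have "transpose_mat M * U = V * transpose_mat S * transpose_mat U * U"
    unfolding M using U V S by (simp add: transpose_mult[of _ p q _ q] transpose_mult[of _ p p _ q])
  also have "\<dots> = V * transpose_mat S"
    using U V S UU by (intro mult_transpose_orth_cancel) auto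
  finally have MtU: "transpose_mat M * U = V * transpose_mat S" .
  have Mc: "M \<in> carrier_mat p q" unfolding M using U V S by simp
  have "M * transpose_mat M * U = M * V * transpose_mat S"
    using Mc U V S by (simp add: assoc_mult_mat[of M p q _ q _ p] flip: MtU)
  also have "\<dots> = U * (S * transpose_mat S)"
    using U S by (simp add: MV)
  finally show ?thesis .
qed

lemma is_svd_zero_mat:
  assumes "is_svd (0\<^sub>m p q) U S V"
  shows "S = 0\<^sub>m p q"
proof -
  have U: "U \<in> carrier_mat p p" and V: "V \<in> carrier_mat q q" and S: "S \<in> carrier_mat p q"
    and UU: "transpose_mat U * U = 1\<^sub>m p" and VV: "transpose_mat V * V = 1\<^sub>m q"
    and M: "0\<^sub>m p q = U * S * transpose_mat V"
    using assms by (auto simp: is_svd_def orth_mat_def)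
  have "U * S = 0\<^sub>m p q * V"
    unfolding M using U V S VV by (intro mult_transpose_orth_cancel[symmetric]) auto
  then have "transpose_mat U * U * S = 0\<^sub>m p q"
    using U V S by (simp add: assoc_mult_mat[of "transpose_mat U" p p _ p _ q])
  then show ?thesis
    using S UU by simp
qed

lemma svd_diagonal_eigen_index:
  assumes X: "X \<in> carrier_mat n n" "diagonal_mat X" and svd: "is_svd X U S V"
    and "i < n" "k < n"
  shows "(X $$ (i,i))\<^sup>2 * U $$ (i,k) = U $$ (i,k) * (S $$ (k,k))\<^sup>2"
proof -
  have U: "U \<in> carrier_mat n n" and S: "S \<in> carrier_mat n n" "diagonal_mat S"
    using svd X by (auto simp: is_svd_def orth_mat_def)
  have XtU: "transpose_mat X * U \<in> carrier_mat n n" using X U by simp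
  have "X * transpose_mat X * U = U * S * transpose_mat S"
    using svd_gram_eigen[OF svd] U S by (simp add: assoc_mult_mat[of U n n _ n _ n])
  moreover have "(X * transpose_mat X * U) $$ (i,k) = (X $$ (i,i))\<^sup>2 * U $$ (i,k)"
  proof -
    have "(X * transpose_mat X * U) $$ (i,k) = (X * (transpose_mat X * U)) $$ (i,k)"
      using X U by (simp add: assoc_mult_mat[of X n n _ n _ n])
    also have "\<dots> = X $$ (i,i) * (transpose_mat X * U) $$ (i,k)"
      by (rule diagonal_mat_mult_index_left[OF X XtU assms(4,5)])
    also have "(transpose_mat X * U) $$ (i,k) = X $$ (i,i) * U $$ (i,k)"
      using diagonal_mat_mult_index_left[OF _ diagonal_mat_transpose[OF X(2)] U assms(4,5)] X assms(4)
      by simp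
    finally show ?thesis by (simp add: power2_eq_square)
  qed
  moreover have "(U * S * transpose_mat S) $$ (i,k) = U $$ (i,k) * (S $$ (k,k))\<^sup>2"
  proof -
    have US: "U * S \<in> carrier_mat n n" using U S by simp
    have "(U * S * transpose_mat S) $$ (i,k) = (U * S) $$ (i,k) * transpose_mat S $$ (k,k)"
      using diagonal_mat_mult_index_right[OF _ diagonal_mat_transpose[OF S(2)] US assms(4,5)] S
      by simp
    also have "(U * S) $$ (i,k) = U $$ (i,k) * S $$ (k,k)"
      by (rule diagonal_mat_mult_index_right[OF S U assms(4,5)])
    finally show ?thesis using S assms(5) by (simp add: power2_eq_square)
  qed
  ultimately show ?thesis by (metis mult.commute)
qed

lemma svd_diagonal_null_vector:
  assumes X: "X \<in> carrier_mat (Suc c) (Suc c)" "diagonal_mat X" and svd: "is_svd X U S V"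
    and null: "X $$ (c,c) = 0" and nonzero: "\<forall>i<c. X $$ (i,i) \<noteq> 0" and "i < c"
  shows "U $$ (i,c) = 0"
proof (cases "S $$ (c,c) = 0")
  case True
  then show ?thesis using svd_diagonal_eigen_index[OF X svd, of i c] nonzero \<open>i < c\<close> by simp
next
  case False
  \<comment> \<open>Then all singular values are positive, and the eigen-equation makes row c of
     the orthogonal matrix U vanish.\<close>
  have U: "U \<in> carrier_mat (Suc c) (Suc c)" and UUt: "U * transpose_mat U = 1\<^sub>m (Suc c)"
    using svd X by (auto simp: is_svd_def orth_mat_def intro: orth_mat_mult_transpose)
  have "S $$ (c,c) \<le> S $$ (k,k)" "0 \<le> S $$ (c,c)" if "k < Suc c" for k
    using svd X that by (auto simp: is_svd_def)
  then have "S $$ (k,k) \<noteq> 0" if "k < Suc c" for k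
    using False that by (metis order.antisym)
  then have "U $$ (c,k) = 0" if "k < Suc c" for k
    using svd_diagonal_eigen_index[OF X svd, of c k] null that by simp
  then have "(U * transpose_mat U) $$ (c,c) = 0"
    using U by (simp add: scalar_prod_def)
  then show ?thesis using UUt by simp
qed

lemma mult_last_col_eq_zero:
  assumes W: "W \<in> carrier_mat n (Suc c)" and "\<forall>j<n. W $$ (j,c) = 0"
    and U: "U \<in> carrier_mat (Suc c) (Suc c)" and "\<forall>i<c. U $$ (i,c) = 0"
  shows "W * last_cols 1 U = 0\<^sub>m n 1"
proof (rule eq_matI)
  fix j k assume "j < dim_row (0\<^sub>m n 1 :: real mat)" "k < dim_col (0\<^sub>m n 1 :: real mat)"
  then have "j < n" "k = 0" by auto
  have "(W * last_cols 1 U) $$ (j,k) = (\<Sum>i<Suc c. W $$ (j,i) * U $$ (i,c))"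
    using W U \<open>j < n\<close> \<open>k = 0\<close> by (simp add: last_cols_def scalar_prod_def lessThan_atLeast0)
  also have "\<dots> = 0"
    using assms \<open>j < n\<close> less_Suc_eq by (intro sum.neutral) auto
  finally show "(W * last_cols 1 U) $$ (j,k) = 0\<^sub>m n 1 $$ (j,k)"
    using \<open>j < n\<close> \<open>k = 0\<close> by simp
qed (use W in \<open>auto simp: last_cols_def\<close>)

lemma is_svd_diagonal:
  assumes "D \<in> carrier_mat n n" "diagonal_mat D" "\<forall>i<n. 0 \<le> D $$ (i,i)"
    and "\<forall>i j. i \<le> j \<longrightarrow> j < n \<longrightarrow> D $$ (j,j) \<le> D $$ (i,i)"
  shows "is_svd D (1\<^sub>m n) D (1\<^sub>m n)"
  using assms by (auto simp: is_svd_def orth_mat_def)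

lemma is_svd_zero_mat_trivial: "is_svd (0\<^sub>m p q) (1\<^sub>m p) (0\<^sub>m p q) (1\<^sub>m q)"
  by (auto simp: is_svd_def orth_mat_def diagonal_mat_def)

lemma lora_factors_zero:
  assumes "U' \<in> carrier_mat n n" "V' \<in> carrier_mat m m" "r \<le> n" "r \<le> m"
  shows "first_cols r U' * sqrt_lead_diag r (0\<^sub>m n m)
           * (sqrt_lead_diag r (0\<^sub>m n m) * first_rows r (transpose_mat V')) = 0\<^sub>m n m"
proof -
  have "sqrt_lead_diag r (0\<^sub>m n m) = 0\<^sub>m r r"
    using assms by (intro eq_matI) (auto simp: sqrt_lead_diag_def)
  then show ?thesis
    using assms by (simp add: first_cols_def first_rows_def)
qed

lemma lora_null_residual_self:
  assumes W0: "W0 \<in> carrier_mat n m" and X: "X \<in> carrier_mat m N" and "r \<le> n" "r \<le> m"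
    and svd: "is_svd X U S V" and annihilated: "W0 * last_cols r U = 0\<^sub>m n r"
  shows "lora_null_residual W0 X r W0"
proof -
  have "last_cols r U \<in> carrier_mat m r"
    using svd X by (auto simp: is_svd_def orth_mat_def last_cols_def)
  then have "W0 * last_cols r U * transpose_mat (last_cols r U) = 0\<^sub>m n m"
    using annihilated by simp
  moreover have "W0 = W0 - first_cols r (1\<^sub>m n) * sqrt_lead_diag r (0\<^sub>m n m)
                   * (sqrt_lead_diag r (0\<^sub>m n m) * first_rows r (transpose_mat (1\<^sub>m m)))"
    using lora_factors_zero[of "1\<^sub>m n" n "1\<^sub>m m" m r] assms by (auto intro: eq_matI)
  ultimately show ?thesis
    unfolding lora_null_residual_def Let_def using svd is_svd_zero_mat_trivial by metis
qed

lemma lora_null_residual_eq_self: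
  assumes W0: "W0 \<in> carrier_mat n m" and X: "X \<in> carrier_mat m N" and "r \<le> n" "r \<le> m"
    and annihilated: "\<And>U S V. is_svd X U S V \<Longrightarrow> W0 * last_cols r U = 0\<^sub>m n r"
    and "lora_null_residual W0 X r W0'"
  shows "W0' = W0"
proof -
  obtain U S V U' S' V' where svd: "is_svd X U S V"
    and svd': "is_svd (W0 * last_cols r U * transpose_mat (last_cols r U)) U' S' V'"
    and W0': "W0' = W0 - first_cols r U' * sqrt_lead_diag r S'
                          * (sqrt_lead_diag r S' * first_rows r (transpose_mat V'))"
    using assms(6) unfolding lora_null_residual_def Let_def by blast
  have "last_cols r U \<in> carrier_mat m r"
    using svd X by (auto simp: is_svd_def orth_mat_def last_cols_def)
  then have "W0 * last_cols r U * transpose_mat (last_cols r U) = 0\<^sub>m n m"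
    using annihilated[OF svd] by simp
  then have zero: "is_svd (0\<^sub>m n m) U' S' V'" using svd' by simp
  then have "S' = 0\<^sub>m n m" by (rule is_svd_zero_mat)
  moreover have "U' \<in> carrier_mat n n" "V' \<in> carrier_mat m m"
    using zero by (auto simp: is_svd_def orth_mat_def)
  ultimately show ?thesis
    using W0' lora_factors_zero assms(1,3,4) by (auto intro: eq_matI)
qed

definition plane_proj :: "real mat" where
  "plane_proj = mat 3 3 (\<lambda>(i,j). if i = j \<and> i < 2 then 1 else 0)"

definition plane_coords :: "real mat" where
  "plane_coords = mat 2 3 (\<lambda>(i,j). if i = j then 1 else 0)"

lemma plane_proj_carrier [simp]: "plane_proj \<in> carrier_mat 3 3"
  by (simp add: plane_proj_def)

lemma plane_coords_carrier [simp]: "plane_coords \<in> carrier_mat 2 3"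
  by (simp add: plane_coords_def)

lemma diagonal_mat_plane_proj: "diagonal_mat plane_proj"
  by (auto simp: plane_proj_def diagonal_mat_def)

lemma is_svd_plane_proj: "is_svd plane_proj (1\<^sub>m 3) plane_proj (1\<^sub>m 3)"
  by (rule is_svd_diagonal[OF plane_proj_carrier diagonal_mat_plane_proj]) (auto simp: plane_proj_def)

lemma plane_coords_annihilates_null_vector:
  assumes "is_svd plane_proj U S V"
  shows "plane_coords * last_cols 1 U = 0\<^sub>m 2 1"
proof (rule mult_last_col_eq_zero)
  have X: "plane_proj \<in> carrier_mat (Suc 2) (Suc 2)" by (simp add: plane_proj_def)
  show "U \<in> carrier_mat (Suc 2) (Suc 2)"
    using assms by (auto simp: is_svd_def orth_mat_def plane_proj_def numeral_3_eq_3)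
  show "\<forall>i<2. U $$ (i,2) = 0"
    using svd_diagonal_null_vector[OF X diagonal_mat_plane_proj assms] by (auto simp: plane_proj_def)
qed (auto simp: plane_coords_def numeral_3_eq_3)

lemma mat_rank_plane_coords: "2 \<le> mat_rank plane_coords"
proof -
  interpret vs: vec_space "TYPE(real)" 2 .
  have I: "(1\<^sub>m 2 :: real mat) \<in> carrier_mat 2 2" by simp
  have cols_one: "cols (1\<^sub>m 2 :: real mat) = [col (1\<^sub>m 2) 0, col (1\<^sub>m 2) 1]"
    by (simp add: cols_def upt_conv_Cons)
  have "col (1\<^sub>m 2 :: real mat) 0 $ 0 \<noteq> col (1\<^sub>m 2) 1 $ 0" by simp
  then have distinct: "distinct (cols (1\<^sub>m 2 :: real mat))"
    unfolding cols_one by auto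
  have indep: "vs.lin_indpt (set (cols (1\<^sub>m 2 :: real mat)))"
    using vs.full_rank_lin_indpt[OF I _ distinct] vs.det_rank_iff[OF I] by simp
  have "col plane_coords 0 = col (1\<^sub>m 2) 0" "col plane_coords 1 = col (1\<^sub>m 2) 1"
    by (auto intro!: eq_vecI simp: plane_coords_def less_2_cases_iff)
  then have "set (cols (1\<^sub>m 2 :: real mat)) \<subseteq> set (cols plane_coords)"
    by (simp add: cols_one cols_def plane_coords_def upt_conv_Cons eval_nat_numeral)
  then have "card (set (cols (1\<^sub>m 2 :: real mat))) \<le> vs.rank plane_coords"
    by (rule vs.rank_ge_card_indpt[OF plane_coords_carrier _ indep])
  then show ?thesis
    using distinct cols_one carrier_matD(1)[OF plane_coords_carrier]
    by (simp add: mat_rank_def distinct_card)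
qed

theorem theorem3:
  shows "\<exists>(n::nat) (m::nat) (N::nat) (W0::real mat) (X::real mat) (r::nat).
           N \<ge> m \<and> W0 \<in> carrier_mat n m \<and> X \<in> carrier_mat m N \<and>
           1 \<le> r \<and> r < mat_rank W0 \<and> r < min n m \<and>
           (\<exists>W0'. lora_null_residual W0 X r W0') \<and>
           (\<forall>W0'. lora_null_residual W0 X r W0' \<longrightarrow>
              \<not> solves_P1 W0 (mat_rank W0 - r) W0' \<and>
              \<not> solves_P2 W0 X (mat_rank W0 - r) W0')"
proof -
  have residual: "lora_null_residual plane_coords plane_proj 1 W0' \<longleftrightarrow> W0' = plane_coords" for W0'
  proof
    show "W0' = plane_coords" if "lora_null_residual plane_coords plane_proj 1 W0'"
      by (rule lora_null_residual_eq_self[OF plane_coords_carrier plane_proj_carrier _ _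
            plane_coords_annihilates_null_vector that]) auto
    show "lora_null_residual plane_coords plane_proj 1 W0'" if "W0' = plane_coords"
      unfolding that
      by (rule lora_null_residual_self[OF plane_coords_carrier plane_proj_carrier _ _
            is_svd_plane_proj plane_coords_annihilates_null_vector[OF is_svd_plane_proj]]) auto
  qed
  have rank: "1 < mat_rank plane_coords" "mat_rank plane_coords - 1 \<noteq> mat_rank plane_coords"
    using mat_rank_plane_coords by auto
  have "\<not> solves_P1 plane_coords (mat_rank plane_coords - 1) plane_coords"
       "\<not> solves_P2 plane_coords plane_proj (mat_rank plane_coords - 1) plane_coords"
    using rank(2) unfolding solves_P1_def solves_P2_def by auto
  then show ?thesis
    using residual rank(1)
    by (intro exI[of _ 2] exI[of _ 3] exI[of _ 3] exI[of _ plane_coords] exI[of _ plane_proj]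
        exI[of _ 1]) simp
qed

end
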